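(* Let $(c_k)_{k\ge0}\subset(0,\infty)$, $(\mu_k)_{k\ge0}\subset(0,\infty)$, and let $\rho$ be a $(0,\infty)$-valued random variable with law $\mathcal L_\rho$, $\mathbb E[\rho]=1$, not almost surely equal to $1$. Define $d_{k+1}=\mathbb E_{\mathcal L_\rho}\big[\frac{c_k(\mu_k\rho+d_k)}{c_k+(\mu_k\rho+d_k)}\big]$, $d^0_{k+1}=\frac{c_kd^0_k}{c_k+d^0_k}$ (the recursion with $\mathcal L_\rho=\delta_0$) and $d^1_{k+1}=\frac{c_k(\mu_k+d^1_k)}{c_k+(\mu_k+d^1_k)}$ (the recursion with $\mathcal L_\rho=\delta_1$). If $d^0_0=d_0=d^1_0\ge0$, then $d^0_k<d_k<d^1_k$ for all $k\in\mathbb N$. *)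

theory Defs
  imports "HOL-Probability.Probability"
begin

primrec dseq :: "'a measure \<Rightarrow> ('a \<Rightarrow> real) \<Rightarrow> (nat \<Rightarrow> real) \<Rightarrow> (nat \<Rightarrow> real) \<Rightarrow> real \<Rightarrow> nat \<Rightarrow> real" where
  "dseq M \<rho> c \<mu> d0 0 = d0"
| "dseq M \<rho> c \<mu> d0 (Suc k) =
     (\<integral>\<omega>. c k * (\<mu> k * \<rho> \<omega> + dseq M \<rho> c \<mu> d0 k) / (c k + (\<mu> k * \<rho> \<omega> + dseq M \<rho> c \<mu> d0 k)) \<partial>M)"

primrec dseq0 :: "(nat \<Rightarrow> real) \<Rightarrow> real \<Rightarrow> nat \<Rightarrow> real" where
  "dseq0 c d0 0 = d0"
| "dseq0 c d0 (Suc k) = c k * dseq0 c d0 k / (c k + dseq0 c d0 k)"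

primrec dseq1 :: "(nat \<Rightarrow> real) \<Rightarrow> (nat \<Rightarrow> real) \<Rightarrow> real \<Rightarrow> nat \<Rightarrow> real" where
  "dseq1 c \<mu> d0 0 = d0"
| "dseq1 c \<mu> d0 (Suc k) = c k * (\<mu> k + dseq1 c \<mu> d0 k) / (c k + (\<mu> k + dseq1 c \<mu> d0 k))"

end

theory Submission
  imports Defs
begin

text \<open>All three recursions iterate maps of the form \<open>x \<mapsto> c x / (c + x)\<close>, which are increasing
  and strictly concave on \<open>[0, \<infinity>)\<close>. The lower bound is monotonicity: \<open>\<mu>\<^sub>k \<rho> + d\<^sub>k > d\<^sub>k\<close>
  pointwise because \<open>\<rho> > 0\<close>. The upper bound is strict Jensen: \<open>\<mu>\<^sub>k \<rho> + d\<^sub>k\<close> has mean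
  \<open>\<mu>\<^sub>k + d\<^sub>k\<close> and is not a.s. constant, and the tangent line of the map at the mean lies
  strictly above its graph elsewhere. Both bounds propagate along the recursion by monotonicity.\<close>

lemma frac_mono:
  fixes c a b :: real
  assumes "c > 0" "0 \<le> a" "a \<le> b"
  shows "c * a / (c + a) \<le> c * b / (c + b)"
proof -
  have "c * c * a \<le> c * c * b" using assms by (intro mult_left_mono) auto
  then show ?thesis using assms by (simp add: divide_simps algebra_simps)
qed

lemma frac_strict_mono:
  fixes c a b :: real
  assumes "c > 0" "0 \<le> a" "a < b"
  shows "c * a / (c + a) < c * b / (c + b)"
proof -
  have "c * c * a < c * c * b" using assms by (intro mult_strict_left_mono) auto
  then show ?thesis using assms by (simp add: divide_simps algebra_simps)
qed

lemma frac_tangent_gap: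
  fixes c x y :: real
  assumes "c + x > 0" "c + y > 0"
  shows "c * y / (c + y) + c\<^sup>2 / (c + y)\<^sup>2 * (x - y) - c * x / (c + x)
       = c\<^sup>2 * (x - y)\<^sup>2 / ((c + x) * (c + y)\<^sup>2)"
proof -
  define X A where "X = c + x" and "A = c + y"
  have "X > 0" "A > 0" using assms unfolding X_def A_def by auto
  then have "(c - c\<^sup>2 / A) + c\<^sup>2 / A\<^sup>2 * (X - A) - (c - c\<^sup>2 / X) = c\<^sup>2 * (X - A)\<^sup>2 / (X * A\<^sup>2)"
    by (simp add: field_simps power2_eq_square)
  moreover have "c * x / (c + x) = c - c\<^sup>2 / X" "c * y / (c + y) = c - c\<^sup>2 / A" "X - A = x - y"
    using assms unfolding X_def A_def by (simp_all add: field_simps power2_eq_square)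
  ultimately show ?thesis unfolding X_def A_def by simp
qed

lemma frac_below_tangent:
  fixes c x y :: real
  assumes "c \<noteq> 0" "c + x > 0" "c + y > 0" "x \<noteq> y"
  shows "c * x / (c + x) < c * y / (c + y) + c\<^sup>2 / (c + y)\<^sup>2 * (x - y)"
proof -
  have "c\<^sup>2 * (x - y)\<^sup>2 / ((c + x) * (c + y)\<^sup>2) > 0" using assms by simp
  then show ?thesis using frac_tangent_gap[OF assms(2,3)] by linarith
qed

lemma (in prob_space) expectation_less_of_strict_supporting_line:
  fixes X :: "'a \<Rightarrow> real" and f :: "real \<Rightarrow> real"
  assumes X: "integrable M X" and fX: "integrable M (\<lambda>\<omega>. f (X \<omega>))"
    and below: "\<And>\<omega>. \<omega> \<in> space M \<Longrightarrow> X \<omega> \<noteq> expectation X \<Longrightarrow>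
                  f (X \<omega>) < f (expectation X) + s * (X \<omega> - expectation X)"
    and nonconst: "\<not> (AE \<omega> in M. X \<omega> = expectation X)"
  shows "expectation (\<lambda>\<omega>. f (X \<omega>)) < f (expectation X)"
proof -
  define g where "g \<omega> = f (expectation X) + s * (X \<omega> - expectation X) - f (X \<omega>)" for \<omega>
  have g_int: "integrable M g" unfolding g_def using X fX by auto
  have g_nonneg: "g \<omega> \<ge> 0" if "\<omega> \<in> space M" for \<omega>
    using below[OF that] unfolding g_def by (cases "X \<omega> = expectation X") auto
  have g_pos: "g \<omega> \<noteq> 0" if "\<omega> \<in> space M" "X \<omega> \<noteq> expectation X" for \<omega>
    using below[OF that] unfolding g_def by auto
  have "expectation g \<noteq> 0"
  proof
    assume "expectation g = 0"
    then have "AE \<omega> in M. g \<omega> = 0"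
      using integral_nonneg_eq_0_iff_AE[OF g_int] g_nonneg by (simp add: AE_I2)
    then have "AE \<omega> in M. X \<omega> = expectation X"
      by (rule AE_mp) (use g_pos in \<open>auto intro: AE_I2\<close>)
    with nonconst show False ..
  qed
  moreover have "expectation g \<ge> 0" using g_nonneg by (simp add: integral_nonneg_AE AE_I2)
  moreover have "expectation g = f (expectation X) - expectation (\<lambda>\<omega>. f (X \<omega>))"
    unfolding g_def using X fX by (simp add: prob_space)
  ultimately show ?thesis by linarith
qed

lemma (in prob_space) expectation_frac_bounds:
  fixes \<rho> :: "'a \<Rightarrow> real" and c m b :: real
  assumes \<rho>_meas: "\<rho> \<in> borel_measurable M"
    and \<rho>_pos: "\<And>\<omega>. \<omega> \<in> space M \<Longrightarrow> \<rho> \<omega> > 0"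
    and \<rho>_int: "integrable M \<rho>"
    and \<rho>_mean: "expectation \<rho> = 1"
    and \<rho>_nonconst: "\<not> (AE \<omega> in M. \<rho> \<omega> = 1)"
    and c: "c > 0" and m: "m > 0" and b: "b \<ge> 0"
  shows "c * b / (c + b) < (\<integral>\<omega>. c * (m * \<rho> \<omega> + b) / (c + (m * \<rho> \<omega> + b)) \<partial>M)"
    and "(\<integral>\<omega>. c * (m * \<rho> \<omega> + b) / (c + (m * \<rho> \<omega> + b)) \<partial>M) < c * (m + b) / (c + (m + b))"
proof -
  define f where "f x = c * x / (c + x)" for x :: real
  define X where "X \<omega> = m * \<rho> \<omega> + b" for \<omega>
  have X_pos: "X \<omega> > 0" if "\<omega> \<in> space M" for \<omega>
    using \<rho>_pos[OF that] m b unfolding X_def by (simp add: add_pos_nonneg)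
  have fX_int: "integrable M (\<lambda>\<omega>. f (X \<omega>))"
  proof (rule integrable_const_bound[where B = c])
    have "norm (f (X \<omega>)) \<le> c" if "\<omega> \<in> space M" for \<omega>
      using X_pos[OF that] c by (simp add: f_def divide_simps)
    then show "AE \<omega> in M. norm (f (X \<omega>)) \<le> c" by (rule AE_I2)
  qed (use \<rho>_meas in \<open>simp add: f_def X_def\<close>)
  have X_int: "integrable M X" unfolding X_def using \<rho>_int by simp
  have X_mean: "expectation X = m + b" unfolding X_def using \<rho>_int \<rho>_mean by (simp add: prob_space)
  have "expectation (\<lambda>_. f b) < expectation (\<lambda>\<omega>. f (X \<omega>))"
  proof (rule integral_less_AE_space)
    show "AE \<omega> in M. f b < f (X \<omega>)"
      using \<rho>_pos c m b by (intro AE_I2) (simp add: f_def X_def frac_strict_mono)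
  qed (use fX_int emeasure_space_1 in auto)
  then show "c * b / (c + b) < (\<integral>\<omega>. c * (m * \<rho> \<omega> + b) / (c + (m * \<rho> \<omega> + b)) \<partial>M)"
    by (simp add: prob_space f_def X_def)
  have X_nonconst: "\<not> (AE \<omega> in M. X \<omega> = expectation X)"
    using \<rho>_nonconst m unfolding X_mean X_def by simp
  have "expectation (\<lambda>\<omega>. f (X \<omega>)) < f (expectation X)"
  proof (rule expectation_less_of_strict_supporting_line[where s = "c\<^sup>2 / (c + (m + b))\<^sup>2",
        OF X_int fX_int _ X_nonconst])
    show "f (X \<omega>) < f (expectation X) + c\<^sup>2 / (c + (m + b))\<^sup>2 * (X \<omega> - expectation X)"
      if "\<omega> \<in> space M" "X \<omega> \<noteq> expectation X" for \<omega>
      using that X_pos[OF that(1)] c m b unfolding X_mean f_def by (intro frac_below_tangent) auto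
  qed
  then show "(\<integral>\<omega>. c * (m * \<rho> \<omega> + b) / (c + (m * \<rho> \<omega> + b)) \<partial>M) < c * (m + b) / (c + (m + b))"
    by (simp add: f_def X_def X_mean)
qed

theorem theorem3p9:
  fixes M :: "'a measure" and \<rho> :: "'a \<Rightarrow> real"
    and c \<mu> :: "nat \<Rightarrow> real" and d0 :: real
  assumes "prob_space M"
    and "\<rho> \<in> borel_measurable M"
    and "\<And>\<omega>. \<omega> \<in> space M \<Longrightarrow> \<rho> \<omega> > 0"
    and "integrable M \<rho>"
    and "(\<integral>\<omega>. \<rho> \<omega> \<partial>M) = 1"
    and "\<not> (AE \<omega> in M. \<rho> \<omega> = 1)"
    and "\<And>k. c k > 0"
    and "\<And>k. \<mu> k > 0"
    and "d0 \<ge> 0"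
    and "k \<ge> 1"
  shows "dseq0 c d0 k < dseq M \<rho> c \<mu> d0 k \<and> dseq M \<rho> c \<mu> d0 k < dseq1 c \<mu> d0 k"
proof -
  interpret prob_space M by fact
  let ?lo = "dseq0 c d0" and ?d = "dseq M \<rho> c \<mu> d0" and ?hi = "dseq1 c \<mu> d0"
  have step: "?lo (Suc j) < ?d (Suc j) \<and> ?d (Suc j) < ?hi (Suc j)"
    if "0 \<le> ?lo j" "?lo j \<le> ?d j" "?d j \<le> ?hi j" for j
  proof -
    have "?d j \<ge> 0" using that by linarith
    note mean_bounds = expectation_frac_bounds[OF assms(2-6) assms(7)[of j] assms(8)[of j] this]
    have "c j * ?lo j / (c j + ?lo j) \<le> c j * ?d j / (c j + ?d j)"
      using frac_mono assms(7) that by blast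
    moreover have "c j * (\<mu> j + ?d j) / (c j + (\<mu> j + ?d j)) \<le> c j * (\<mu> j + ?hi j) / (c j + (\<mu> j + ?hi j))"
      using frac_mono[of "c j" "\<mu> j + ?d j" "\<mu> j + ?hi j"] assms(7,8)[of j] that \<open>?d j \<ge> 0\<close> by simp
    ultimately show ?thesis using mean_bounds unfolding dseq0.simps dseq.simps dseq1.simps by linarith
  qed
  have invariant: "0 \<le> ?lo j \<and> ?lo j \<le> ?d j \<and> ?d j \<le> ?hi j" for j
  proof (induction j)
    case (Suc j)
    have "0 \<le> ?lo (Suc j)" using assms(7)[of j] Suc.IH by (simp add: zero_le_divide_iff)
    then show ?case using step[of j] Suc.IH by auto
  qed (use assms(9) in simp)
  obtain j where "k = Suc j" using assms(10) by (cases k) auto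
  then show ?thesis using step invariant by blast
qed

end
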